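(* Let $X$ be a finite-dimensional real Hilbert space, $I=\{1,\dots,m\}$, and $(U_i)_{i\in I}$ closed convex subsets of $X$ with $\bigcap_{i\in I}\operatorname{ri}U_i\neq\varnothing$. Set $U_{m+1}=U_1$, $T_i=P_{U_{i+1}}R_{U_i}+\mathrm{Id}-P_{U_i}$ for $i\in I$, $Z=\bigcap_{i\in I}\operatorname{Fix}T_i$, and $T=T_mT_{m-1}\cdots T_1$. Then for every $x_0\in X$, the sequence $(T^nx_0)_{n\in\mathbb N}$ converges linearly to a point of $Z$.
   Context: $P_S$ is the metric projection onto a closed convex set $S$, $R_S=2P_S-\mathrm{Id}$, $\operatorname{ri}$ the relative interior. Linear convergence to $\bar x$ means $\|x_n-\bar x\|\le cq^n$ for some $c\ge0$, $q\in[0,1[$. *)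

theory Defs
  imports "HOL-Analysis.Analysis"
begin

definition proj :: "'a::euclidean_space set \<Rightarrow> 'a \<Rightarrow> 'a" where
  "proj S x = closest_point S x"

definition refl_op :: "'a::euclidean_space set \<Rightarrow> 'a \<Rightarrow> 'a" where
  "refl_op S x = 2 *\<^sub>R proj S x - x"

definition Ucyc :: "nat \<Rightarrow> (nat \<Rightarrow> 'a set) \<Rightarrow> nat \<Rightarrow> 'a set" where
  "Ucyc m U i = (if i = m + 1 then U 1 else U i)"

definition T_op :: "nat \<Rightarrow> (nat \<Rightarrow> 'a::euclidean_space set) \<Rightarrow> nat \<Rightarrow> 'a \<Rightarrow> 'a" where
  "T_op m U i x = proj (Ucyc m U (i + 1)) (refl_op (Ucyc m U i) x) + x - proj (Ucyc m U i) x"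

fun T_comp :: "nat \<Rightarrow> (nat \<Rightarrow> 'a::euclidean_space set) \<Rightarrow> nat \<Rightarrow> 'a \<Rightarrow> 'a" where
  "T_comp m U 0 = id"
| "T_comp m U (Suc k) = T_op m U (Suc k) \<circ> T_comp m U k"

definition Fix :: "('a \<Rightarrow> 'a) \<Rightarrow> 'a set" where
  "Fix f = {x. f x = x}"

definition lin_conv :: "(nat \<Rightarrow> 'a::real_normed_vector) \<Rightarrow> 'a \<Rightarrow> bool" where
  "lin_conv xs xbar \<longleftrightarrow> (\<exists>c q. c \<ge> 0 \<and> 0 \<le> q \<and> q < 1 \<and> (\<forall>n. norm (xs n - xbar) \<le> c * q ^ n))"

end

theory Submission
  imports Defs
begin

text \<open>Fix \<open>c\<close> in the common relative interior. Each \<open>T\<^sub>i\<close> is the Douglas--Rachford operator of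
  the pair \<open>(U\<^sub>i, U\<^sub>i\<^sub>+\<^sub>1)\<close>, hence firmly nonexpansive, so \<open>T\<close> is Fejer monotone with respect to
  \<open>Z\<close>, its defect being the sum of the squared step lengths of one sweep. On bounded sets the
  distance from \<open>x\<close> to \<open>(U\<^sub>i \<inter> U\<^sub>i\<^sub>+\<^sub>1) + (L\<^sub>i\<^sup>\<bottom> \<inter> L\<^sub>i\<^sub>+\<^sub>1\<^sup>\<bottom>) \<subseteq> Fix T\<^sub>i\<close>, where \<open>L\<^sub>i\<close> is the direction
  of \<open>aff U\<^sub>i\<close>, is at most a constant times \<open>\<parallel>x - T\<^sub>ix\<parallel>\<close>. All these sets contain a relative ball
  about \<open>c\<close>, so finitely many of them are boundedly linearly regular, and the distance from \<open>x\<close> to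
  their intersection is at most a constant times the square root of the defect. A Fejer monotone
  sequence whose defect dominates the squared distance to a closed convex subset of \<open>Z\<close> approaches
  that subset geometrically, and therefore converges linearly to one of its points.\<close>

section \<open>Linear regularity\<close>

text \<open>Bounded linear regularity of the family \<open>\<C>\<close> on \<open>S\<close>,
  \<open>d(x, \<Inter>\<C>) \<le> \<kappa> max\<^sub>C d(x, C)\<close>, phrased with witnesses so that no closedness is needed.\<close>
definition linearly_regular_on :: "'a::real_normed_vector set set \<Rightarrow> 'a set \<Rightarrow> real \<Rightarrow> bool" where
  "linearly_regular_on \<C> S \<kappa> \<longleftrightarrow>
     (\<forall>x\<in>S. \<forall>\<delta>\<ge>0. (\<forall>C\<in>\<C>. \<exists>a\<in>C. norm (x - a) \<le> \<delta>) \<longrightarrow> (\<exists>p\<in>\<Inter>\<C>. norm (x - p) \<le> \<kappa> * \<delta>))"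

lemma linearly_regular_onD:
  assumes "linearly_regular_on \<C> S \<kappa>" "x \<in> S" "\<delta> \<ge> 0"
    and "\<And>C. C \<in> \<C> \<Longrightarrow> \<exists>a\<in>C. norm (x - a) \<le> \<delta>"
  obtains p where "p \<in> \<Inter>\<C>" "norm (x - p) \<le> \<kappa> * \<delta>"
  using assms unfolding linearly_regular_on_def by blast

lemma subspaces_transversal_bound:
  fixes \<M> :: "'a::euclidean_space set set"
  assumes fin: "finite \<M>" and sub: "\<And>M. M \<in> \<M> \<Longrightarrow> subspace M"
  shows "\<exists>\<gamma>>0. \<forall>u \<in> sphere 0 1 \<inter> (\<Inter>\<M>)\<^sup>\<bottom>. \<gamma> \<le> (\<Sum>M\<in>\<M>. infdist u M)"
proof -
  define K where "K = sphere (0::'a) 1 \<inter> (\<Inter>\<M>)\<^sup>\<bottom>"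
  define g where "g u = (\<Sum>M\<in>\<M>. infdist u M)" for u
  have "compact K"
    unfolding K_def by (intro compact_Int_closed compact_sphere closed_subspace subspace_orthogonal_comp)
  show ?thesis
  proof (cases "K = {}")
    case True
    then show ?thesis unfolding K_def by (intro exI[of _ 1]) auto
  next
    case False
    have "continuous_on K g"
      unfolding g_def by (intro continuous_on_sum continuous_on_infdist continuous_on_id)
    then obtain u0 where u0: "u0 \<in> K" "\<And>u. u \<in> K \<Longrightarrow> g u0 \<le> g u"
      using continuous_attains_inf[OF \<open>compact K\<close> False] by blast
    have "g u0 > 0"
    proof (rule ccontr)
      assume "\<not> g u0 > 0"
      moreover have "g u0 \<ge> 0"
        unfolding g_def by (simp add: sum_nonneg infdist_nonneg)
      ultimately have "g u0 = 0"
        by simp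
      then have "\<forall>M\<in>\<M>. infdist u0 M = 0"
        unfolding g_def by (simp add: sum_nonneg_eq_0_iff[OF fin] infdist_nonneg)
      then have "u0 \<in> \<Inter>\<M>"
      proof (intro InterI)
        fix M assume "M \<in> \<M>" and "\<forall>M\<in>\<M>. infdist u0 M = 0"
        moreover have "closed M" "M \<noteq> {}"
          using sub[OF \<open>M \<in> \<M>\<close>] closed_subspace subspace_0 by auto
        ultimately show "u0 \<in> M"
          using in_closed_iff_infdist_zero by blast
      qed
      moreover have "u0 \<in> (\<Inter>\<M>)\<^sup>\<bottom>" and "u0 \<noteq> 0"
        using u0(1) unfolding K_def by auto
      ultimately have "orthogonal u0 u0"
        unfolding orthogonal_comp_def by blast
      with \<open>u0 \<noteq> 0\<close> show False
        by (simp add: orthogonal_self)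
    qed
    then show ?thesis
      using u0 unfolding K_def g_def by blast
  qed
qed

lemma infdist_subspace_le:
  fixes M :: "'a::real_normed_vector set"
  assumes "subspace M" "y \<in> M" "w \<in> M" "t > 0"
  shows "infdist ((v - y) /\<^sub>R t) M \<le> norm (v - w) / t"
proof -
  have "(w - y) /\<^sub>R t \<in> M"
    using assms(1-3) by (simp add: subspace_diff subspace_scale)
  then have "infdist ((v - y) /\<^sub>R t) M \<le> dist ((v - y) /\<^sub>R t) ((w - y) /\<^sub>R t)"
    by (rule infdist_le)
  moreover have "(v - y) /\<^sub>R t - (w - y) /\<^sub>R t = (v - w) /\<^sub>R t"
    by (simp add: algebra_simps)
  then have "dist ((v - y) /\<^sub>R t) ((w - y) /\<^sub>R t) = norm (v - w) / t"
    using assms(4) by (simp add: dist_norm divide_inverse_commute)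
  ultimately show ?thesis
    by simp
qed

lemma linearly_regular_on_subspaces:
  fixes \<M> :: "'a::euclidean_space set set"
  assumes fin: "finite \<M>" and sub: "\<And>M. M \<in> \<M> \<Longrightarrow> subspace M"
  shows "\<exists>\<mu>\<ge>0. linearly_regular_on \<M> UNIV \<mu>"
proof -
  obtain \<gamma> where \<gamma>: "\<gamma> > 0" "\<And>u. u \<in> sphere 0 1 \<inter> (\<Inter>\<M>)\<^sup>\<bottom> \<Longrightarrow> \<gamma> \<le> (\<Sum>M\<in>\<M>. infdist u M)"
    using subspaces_transversal_bound[OF fin sub] by blast
  have "linearly_regular_on \<M> UNIV (card \<M> / \<gamma>)"
    unfolding linearly_regular_on_def
  proof (intro ballI allI impI)
    fix v :: 'a and \<delta> :: real
    assume "\<delta> \<ge> 0" and near: "\<forall>M\<in>\<M>. \<exists>w\<in>M. norm (v - w) \<le> \<delta>"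
    have "subspace (\<Inter>\<M>)"
      using sub by (simp add: subspace_Inter)
    then have "v \<in> \<Inter>\<M> + (\<Inter>\<M>)\<^sup>\<bottom>"
      by (simp add: subspace_sum_orthogonal_comp)
    then obtain y z where v: "v = y + z" and y: "y \<in> \<Inter>\<M>" and z: "z \<in> (\<Inter>\<M>)\<^sup>\<bottom>"
      by (rule set_plus_elim)
    have "norm z \<le> card \<M> / \<gamma> * \<delta>"
    proof (cases "z = 0")
      case True
      then show ?thesis using \<open>\<delta> \<ge> 0\<close> \<gamma> by simp
    next
      case False
      let ?u = "z /\<^sub>R norm z"
      have "infdist ?u M \<le> \<delta> / norm z" if M: "M \<in> \<M>" for M
      proof -
        obtain w where "w \<in> M" "norm (v - w) \<le> \<delta>"
          using near M by blast
        moreover have "?u = (v - y) /\<^sub>R norm z"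
          using v by simp
        ultimately show ?thesis
          using infdist_subspace_le[OF sub[OF M], of y w "norm z" v] y M False
          by (simp add: divide_right_mono order_trans)
      qed
      then have "(\<Sum>M\<in>\<M>. infdist ?u M) \<le> card \<M> * (\<delta> / norm z)"
        using sum_mono[of \<M> "\<lambda>M. infdist ?u M" "\<lambda>_. \<delta> / norm z"] by simp
      moreover have "?u \<in> sphere 0 1 \<inter> (\<Inter>\<M>)\<^sup>\<bottom>"
        using False subspace_scale[OF subspace_orthogonal_comp z] by simp
      ultimately have "\<gamma> \<le> card \<M> * (\<delta> / norm z)"
        using \<gamma>(2) order_trans by blast
      then have "\<gamma> * norm z \<le> card \<M> * \<delta>"
        using False by (simp add: field_simps)
      then show ?thesis
        using \<gamma>(1) by (simp add: field_simps)
    qed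
    then show "\<exists>p\<in>\<Inter>\<M>. norm (v - p) \<le> card \<M> / \<gamma> * \<delta>"
      using y v by (intro bexI[of _ y]) auto
  qed
  then show ?thesis
    using \<gamma>(1) by (intro exI[of _ "card \<M> / \<gamma>"]) auto
qed

lemma orthogonal_comp_approx:
  fixes L :: "'a::euclidean_space set"
  assumes "subspace L" "r > 0" and bound: "\<And>s. s \<in> L \<Longrightarrow> norm s \<le> r \<Longrightarrow> inner u s \<le> K"
  shows "\<exists>w\<in>L\<^sup>\<bottom>. norm (u - w) \<le> K / r"
proof -
  have "u \<in> L + L\<^sup>\<bottom>"
    using assms(1) by (simp add: subspace_sum_orthogonal_comp)
  then obtain l w where u: "u = l + w" and l: "l \<in> L" and w: "w \<in> L\<^sup>\<bottom>"
    by (rule set_plus_elim)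
  have "norm l \<le> K / r"
  proof (cases "l = 0")
    case True
    then show ?thesis
      using bound[of 0] assms(1,2) by (simp add: subspace_0)
  next
    case False
    let ?s = "(r / norm l) *\<^sub>R l"
    have "?s \<in> L" "norm ?s \<le> r"
      using l assms(1,2) False by (simp_all add: subspace_scale)
    moreover have "inner w l = 0"
      using w l unfolding orthogonal_comp_def orthogonal_def by (simp add: inner_commute)
    then have "inner u ?s = r * norm l"
      using False by (simp add: u inner_add_left power2_norm_eq_inner[symmetric] power2_eq_square)
    ultimately have "r * norm l \<le> K"
      using bound by metis
    then show ?thesis
      using assms(2) by (simp add: field_simps)
  qed
  then show ?thesis
    using w u by (intro bexI[of _ w]) auto
qed

lemma subspace_set_plus:
  assumes "subspace S" "subspace T"
  shows "subspace (S + T)"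
proof -
  have "S + T = {x + y |x y. x \<in> S \<and> y \<in> T}"
    unfolding set_plus_def by auto
  then show ?thesis
    using subspace_sums[OF assms] by simp
qed

text \<open>A quantitative form of \<open>c \<in> rel_interior C\<close>, with \<open>M\<close> playing the role of the direction
  of \<open>affine hull C\<close>.\<close>
definition relative_ball :: "'a::real_normed_vector set \<Rightarrow> 'a set \<Rightarrow> 'a \<Rightarrow> real \<Rightarrow> bool" where
  "relative_ball C M c r \<longleftrightarrow> (\<forall>x\<in>C. x - c \<in> M) \<and> (\<forall>v\<in>M. norm v \<le> r \<longrightarrow> c + v \<in> C)"

lemma relative_ball_mono: "relative_ball C M c r \<Longrightarrow> r' \<le> r \<Longrightarrow> relative_ball C M c r'"
  unfolding relative_ball_def by auto

lemma relative_ball_centre: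
  assumes "relative_ball C M c r" "subspace M" "0 \<le> r"
  shows "c \<in> C"
proof -
  have "c + 0 \<in> C"
    using assms(1,3) subspace_0[OF assms(2)] unfolding relative_ball_def by (metis norm_zero)
  then show ?thesis
    by simp
qed

lemma rel_interior_relative_ball:
  fixes S :: "'a::euclidean_space set"
  assumes "c \<in> rel_interior S"
  obtains r where "r > 0" "relative_ball S (span ((\<lambda>x. x - c) ` S)) c r"
proof -
  obtain e where "c \<in> S" "e > 0" and e: "ball c e \<inter> affine hull S \<subseteq> S"
    using assms mem_rel_interior_ball by blast
  have "c \<in> affine hull S"
    using \<open>c \<in> S\<close> by (simp add: hull_inc)
  then have aff: "affine hull S = (\<lambda>x. c + x) ` span ((\<lambda>x. x - c) ` S)"
    using affine_hull_span_gen[of c S] by simp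
  have "relative_ball S (span ((\<lambda>x. x - c) ` S)) c (e / 2)"
    unfolding relative_ball_def
  proof (intro conjI ballI impI)
    show "x - c \<in> span ((\<lambda>x. x - c) ` S)" if "x \<in> S" for x
      using that by (intro span_base imageI)
    fix v assume "v \<in> span ((\<lambda>x. x - c) ` S)" "norm v \<le> e / 2"
    then have "c + v \<in> affine hull S" "c + v \<in> ball c e"
      using \<open>e > 0\<close> unfolding aff by (auto simp: dist_norm)
    then show "c + v \<in> S"
      using e by blast
  qed
  moreover have "e / 2 > 0"
    using \<open>e > 0\<close> by simp
  ultimately show thesis
    using that by blast
qed

lemma convex_relative_ball_shrink:
  assumes "convex C" "subspace M" "relative_ball C M c r" "r > 0"
    and "a \<in> C" "y - c \<in> M" "norm (y - a) \<le> D"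
  shows "(r / (r + D)) *\<^sub>R y + (D / (r + D)) *\<^sub>R c \<in> C"
proof (cases "D = 0")
  case True
  then show ?thesis
    using assms(4,5,7) by simp
next
  case False
  have "D \<ge> 0"
    using order_trans[OF norm_ge_zero assms(7)] .
  with False have "D > 0"
    by simp
  have "a - c \<in> M"
    using assms(3,5) unfolding relative_ball_def by blast
  then have "(y - c) - (a - c) \<in> M"
    using subspace_diff[OF assms(2) assms(6)] by blast
  then have "y - a \<in> M"
    by simp
  then have "(r / D) *\<^sub>R (y - a) \<in> M"
    using assms(2) by (simp add: subspace_scale)
  moreover have "norm ((r / D) *\<^sub>R (y - a)) \<le> r"
  proof -
    have "r * norm (y - a) \<le> r * D"
      using assms(4,7) by (simp add: mult_left_mono)
    then show ?thesis
      using \<open>D > 0\<close> assms(4) by (simp add: pos_divide_le_eq)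
  qed
  ultimately have w: "c + (r / D) *\<^sub>R (y - a) \<in> C"
    using assms(3) unfolding relative_ball_def by blast
  \<comment> \<open>the point is a convex combination of \<open>a\<close> and \<open>w\<close>\<close>
  have "(r / (r + D)) *\<^sub>R y + (D / (r + D)) *\<^sub>R c
        = (r / (r + D)) *\<^sub>R a + (D / (r + D)) *\<^sub>R (c + (r / D) *\<^sub>R (y - a))"
  proof -
    have "(D / (r + D)) * (r / D) = r / (r + D)"
      using \<open>D > 0\<close> by simp
    then show ?thesis
      using \<open>D > 0\<close> by (simp add: scaleR_add_right scaleR_diff_right algebra_simps)
  qed
  also have "\<dots> \<in> C"
    using convexD[OF assms(1) assms(5) w, of "r / (r + D)" "D / (r + D)"] assms(4) \<open>D > 0\<close>
    by (simp add: add_divide_distrib[symmetric])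
  finally show ?thesis .
qed

lemma relative_balls_common_point:
  fixes \<C> :: "'a::real_normed_vector set set"
  assumes "r > 0" "D \<ge> 0"
    and rb: "\<And>C. C \<in> \<C> \<Longrightarrow> convex C \<and> subspace (M C) \<and> relative_ball C (M C) c r \<and> y - c \<in> M C"
    and near: "\<And>C. C \<in> \<C> \<Longrightarrow> \<exists>a\<in>C. norm (y - a) \<le> D"
  shows "\<exists>p\<in>\<Inter>\<C>. norm (y - p) \<le> D / r * norm (y - c)"
proof
  define p where "p = (r / (r + D)) *\<^sub>R y + (D / (r + D)) *\<^sub>R c"
  show "p \<in> \<Inter>\<C>"
  proof
    fix C assume "C \<in> \<C>"
    then obtain a where "a \<in> C" "norm (y - a) \<le> D"
      using near by blast
    then show "p \<in> C"
      unfolding p_def using rb[OF \<open>C \<in> \<C>\<close>] convex_relative_ball_shrink[of C "M C" c r a y D] \<open>r > 0\<close>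
      by blast
  qed
  have "D / (r + D) = 1 - r / (r + D)"
    using \<open>r > 0\<close> \<open>D \<ge> 0\<close> by (simp add: field_simps)
  then have "y - (r / (r + D)) *\<^sub>R y = (D / (r + D)) *\<^sub>R y"
    by (simp add: scaleR_diff_left)
  moreover have "y - p = (y - (r / (r + D)) *\<^sub>R y) - (D / (r + D)) *\<^sub>R c"
    unfolding p_def by (simp add: diff_diff_eq)
  ultimately have "y - p = (D / (r + D)) *\<^sub>R (y - c)"
    by (simp add: scaleR_diff_right)
  then have "norm (y - p) = (D / (r + D)) * norm (y - c)"
    using \<open>r > 0\<close> \<open>D \<ge> 0\<close> by simp
  also have "\<dots> \<le> D / r * norm (y - c)"
    using \<open>r > 0\<close> \<open>D \<ge> 0\<close> by (intro mult_right_mono) (simp_all add: frac_le)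
  finally show "norm (y - p) \<le> D / r * norm (y - c)" .
qed

lemma relative_balls_regular_bound:
  fixes \<C> :: "'a::real_normed_vector set set"
  assumes "r > 0" "\<mu> \<ge> 0" "\<delta> \<ge> 0" "\<delta> \<le> R" "norm (x - c) \<le> R"
    and M: "\<And>C. C \<in> \<C> \<Longrightarrow> convex C \<and> subspace (M C) \<and> relative_ball C (M C) c r"
    and \<mu>: "linearly_regular_on (M ` \<C>) UNIV \<mu>"
    and near: "\<And>C. C \<in> \<C> \<Longrightarrow> \<exists>a\<in>C. norm (x - a) \<le> \<delta>"
  shows "\<exists>p\<in>\<Inter>\<C>. norm (x - p) \<le> (\<mu> + (1 + \<mu>) * (R + \<mu> * R) / r) * \<delta>"
proof -
  have "\<exists>w\<in>N. norm ((x - c) - w) \<le> \<delta>" if "N \<in> M ` \<C>" for N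
  proof -
    obtain C where C: "C \<in> \<C>" "N = M C"
      using \<open>N \<in> M ` \<C>\<close> by blast
    then obtain a where "a \<in> C" "norm (x - a) \<le> \<delta>"
      using near by blast
    moreover have "a - c \<in> N"
      using M C \<open>a \<in> C\<close> unfolding relative_ball_def by blast
    ultimately show ?thesis
      by (intro bexI[of _ "a - c"]) auto
  qed
  then obtain l where l: "l \<in> \<Inter>(M ` \<C>)" and "norm ((x - c) - l) \<le> \<mu> * \<delta>"
    using linearly_regular_onD[OF \<mu> UNIV_I \<open>\<delta> \<ge> 0\<close>] by blast
  then have xy: "norm (x - (c + l)) \<le> \<mu> * \<delta>"
    by (simp add: algebra_simps)
  have "\<exists>a\<in>C. norm ((c + l) - a) \<le> (1 + \<mu>) * \<delta>" if C: "C \<in> \<C>" for C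
  proof -
    obtain a where "a \<in> C" "norm (x - a) \<le> \<delta>"
      using near C by blast
    moreover have "norm ((c + l) - a) \<le> \<mu> * \<delta> + \<delta>"
      using norm_diff_triangle_le[of "c + l" x _ a] xy \<open>norm (x - a) \<le> \<delta>\<close>
      by (simp add: norm_minus_commute)
    ultimately show ?thesis
      by (intro bexI[of _ a]) (simp_all add: algebra_simps)
  qed
  moreover have "(1 + \<mu>) * \<delta> \<ge> 0"
    using assms(2,3) by simp
  moreover have "convex C \<and> subspace (M C) \<and> relative_ball C (M C) c r \<and> (c + l) - c \<in> M C"
    if "C \<in> \<C>" for C
    using M[OF that] l that by auto
  ultimately obtain p where "p \<in> \<Inter>\<C>" and yp: "norm ((c + l) - p) \<le> (1 + \<mu>) * \<delta> / r * norm l"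
    using relative_balls_common_point[OF \<open>r > 0\<close>, of "(1 + \<mu>) * \<delta>" \<C> M c "c + l"] by auto
  have "norm l \<le> R + \<mu> * R"
    using norm_triangle_ineq4[of "x - c" "x - (c + l)"] assms(2,4,5) xy
      mult_left_mono[of \<delta> R \<mu>] by (simp add: algebra_simps)
  then have "(1 + \<mu>) * \<delta> / r * norm l \<le> (1 + \<mu>) * (R + \<mu> * R) / r * \<delta>"
    using assms(1-3) by (simp add: mult_left_mono divide_right_mono mult_ac)
  then have "norm (x - p) \<le> (\<mu> + (1 + \<mu>) * (R + \<mu> * R) / r) * \<delta>"
    using norm_triangle_ineq[of "x - (c + l)" "(c + l) - p"] xy yp by (simp add: distrib_right)
  then show ?thesis
    using \<open>p \<in> \<Inter>\<C>\<close> by blast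
qed

lemma linearly_regular_on_convex:
  fixes \<C> :: "'a::euclidean_space set set"
  assumes fin: "finite \<C>" and "r > 0"
    and rb: "\<And>C. C \<in> \<C> \<Longrightarrow> convex C \<and> (\<exists>M. subspace M \<and> relative_ball C M c r)"
  shows "\<exists>\<kappa>\<ge>0. linearly_regular_on \<C> (cball c R) \<kappa>"
proof -
  have "\<forall>C\<in>\<C>. \<exists>M. convex C \<and> subspace M \<and> relative_ball C M c r"
    using rb by blast
  then obtain M where "\<forall>C\<in>\<C>. convex C \<and> subspace (M C) \<and> relative_ball C (M C) c r"
    by (rule bchoice[elim_format]) blast
  then have M: "\<And>C. C \<in> \<C> \<Longrightarrow> convex C \<and> subspace (M C) \<and> relative_ball C (M C) c r"
    by blast
  obtain \<mu> where "\<mu> \<ge> 0" and \<mu>: "linearly_regular_on (M ` \<C>) UNIV \<mu>"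
    using linearly_regular_on_subspaces[of "M ` \<C>"] fin M by blast
  define \<kappa> where "\<kappa> = max 1 (\<mu> + (1 + \<mu>) * (R + \<mu> * R) / r)"
  have "c \<in> \<Inter>\<C>"
  proof
    fix C assume "C \<in> \<C>"
    then show "c \<in> C"
      using relative_ball_centre[of C "M C" c r] M \<open>r > 0\<close> by simp
  qed
  have "linearly_regular_on \<C> (cball c R) \<kappa>"
    unfolding linearly_regular_on_def
  proof (intro ballI allI impI)
    fix x \<delta> assume "x \<in> cball c R" "\<delta> \<ge> 0" and near: "\<forall>C\<in>\<C>. \<exists>a\<in>C. norm (x - a) \<le> \<delta>"
    then have xc: "norm (x - c) \<le> R"
      by (simp add: dist_norm norm_minus_commute)
    \<comment> \<open>the bound of \<open>relative_balls_regular_bound\<close> is linear in \<open>\<delta>\<close> only for \<open>\<delta> \<le> R\<close>\<close>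
    show "\<exists>p\<in>\<Inter>\<C>. norm (x - p) \<le> \<kappa> * \<delta>"
    proof (cases "\<delta> \<le> R")
      case True
      have "\<And>C. C \<in> \<C> \<Longrightarrow> \<exists>a\<in>C. norm (x - a) \<le> \<delta>"
        using near by blast
      then obtain p where "p \<in> \<Inter>\<C>" and p: "norm (x - p) \<le> (\<mu> + (1 + \<mu>) * (R + \<mu> * R) / r) * \<delta>"
        using relative_balls_regular_bound[OF \<open>r > 0\<close> \<open>\<mu> \<ge> 0\<close> \<open>\<delta> \<ge> 0\<close> True xc M \<mu>] by blast
      moreover have "(\<mu> + (1 + \<mu>) * (R + \<mu> * R) / r) * \<delta> \<le> \<kappa> * \<delta>"
        unfolding \<kappa>_def using \<open>\<delta> \<ge> 0\<close> by (intro mult_right_mono) auto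
      ultimately show ?thesis
        using order_trans[OF p] by blast
    next
      case False
      have "norm (x - c) \<le> \<kappa> * \<delta>"
        using mult_right_mono[of 1 \<kappa> \<delta>] \<open>\<delta> \<ge> 0\<close> xc False unfolding \<kappa>_def by simp
      then show ?thesis
        using \<open>c \<in> \<Inter>\<C>\<close> by blast
    qed
  qed
  moreover have "\<kappa> \<ge> 0"
    unfolding \<kappa>_def by simp
  ultimately show ?thesis
    by blast
qed

section \<open>Douglas--Rachford operators\<close>

lemma closest_point_firmly_nonexpansive:
  fixes S :: "'a::euclidean_space set"
  assumes "closed S" "convex S" "S \<noteq> {}"
  shows "inner (closest_point S x - closest_point S y) (closest_point S x - closest_point S y)
           \<le> inner (x - y) (closest_point S x - closest_point S y)"
proof -
  have "inner (x - closest_point S x) (closest_point S y - closest_point S x) \<le> 0"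
    and "inner (y - closest_point S y) (closest_point S x - closest_point S y) \<le> 0"
    using assms by (simp_all add: closest_point_dot closest_point_in_set)
  then show ?thesis
    by (simp add: inner_diff inner_commute algebra_simps)
qed

lemma closest_point_eqI:
  fixes S :: "'a::euclidean_space set"
  assumes "closed S" "convex S" "p \<in> S" and obtuse: "\<And>s. s \<in> S \<Longrightarrow> inner (x - p) (s - p) \<le> 0"
  shows "closest_point S x = p"
proof -
  have "dist x p \<le> dist x s" if "s \<in> S" for s
  proof -
    have "(norm (x - s))\<^sup>2 = (norm (x - p))\<^sup>2 + (norm (p - s))\<^sup>2 - 2 * inner (x - p) (s - p)"
      unfolding power2_norm_eq_inner by (simp add: inner_diff inner_commute algebra_simps)
    then have "(norm (x - p))\<^sup>2 \<le> (norm (x - s))\<^sup>2"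
      using obtuse[OF that] zero_le_power2[of "norm (p - s)"] by linarith
    then show ?thesis
      by (simp add: dist_norm power2_le_iff_abs_le)
  qed
  then show ?thesis
    using closest_point_unique[OF assms(2,1,3)] by metis
qed

lemma closest_point_dist_le:
  fixes S :: "'a::euclidean_space set"
  assumes "closed S" "convex S" "c \<in> S"
  shows "dist (closest_point S x) c \<le> dist x c"
  using closest_point_lipschitz[OF assms(2,1), of x c] closest_point_self[OF assms(3)] assms(3)
  by auto

definition douglas_rachford :: "'a::euclidean_space set \<Rightarrow> 'a set \<Rightarrow> 'a \<Rightarrow> 'a" where
  "douglas_rachford A B x = x - closest_point A x + closest_point B (2 *\<^sub>R closest_point A x - x)"

lemma douglas_rachford_firmly_nonexpansive:
  fixes A B :: "'a::euclidean_space set"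
  assumes "closed A" "convex A" "A \<noteq> {}" "closed B" "convex B" "B \<noteq> {}"
  shows "(norm (douglas_rachford A B x - douglas_rachford A B y))\<^sup>2
           + (norm ((x - douglas_rachford A B x) - (y - douglas_rachford A B y)))\<^sup>2
         \<le> (norm (x - y))\<^sup>2"
proof -
  define a where "a = closest_point A x - closest_point A y"
  define b where "b = closest_point B (2 *\<^sub>R closest_point A x - x)
                    - closest_point B (2 *\<^sub>R closest_point A y - y)"
  have "inner a a \<le> inner (x - y) a"
    unfolding a_def using assms(1-3) by (rule closest_point_firmly_nonexpansive)
  moreover have "inner b b \<le> inner (2 *\<^sub>R a - (x - y)) b"
  proof -
    have eq: "(2 *\<^sub>R closest_point A x - x) - (2 *\<^sub>R closest_point A y - y) = 2 *\<^sub>R a - (x - y)"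
      unfolding a_def by (simp add: algebra_simps)
    from closest_point_firmly_nonexpansive[OF assms(4-6),
        of "2 *\<^sub>R closest_point A x - x" "2 *\<^sub>R closest_point A y - y"]
    show ?thesis
      unfolding b_def eq .
  qed
  ultimately have "(norm ((x - y) - a + b))\<^sup>2 + (norm (a - b))\<^sup>2 \<le> (norm (x - y))\<^sup>2"
    unfolding power2_norm_eq_inner by (simp add: inner_diff inner_add inner_commute algebra_simps)
  moreover have "douglas_rachford A B x - douglas_rachford A B y = (x - y) - a + b"
    and "(x - douglas_rachford A B x) - (y - douglas_rachford A B y) = a - b"
    unfolding douglas_rachford_def a_def b_def by (simp_all add: algebra_simps)
  ultimately show ?thesis
    by simp
qed

lemma continuous_on_douglas_rachford:
  fixes A B :: "'a::euclidean_space set"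
  assumes "closed A" "convex A" "A \<noteq> {}" "closed B" "convex B" "B \<noteq> {}"
  shows "continuous_on S (douglas_rachford A B)"
proof -
  have cA: "continuous_on S (closest_point A)" and cB: "continuous_on UNIV (closest_point B)"
    using assms by (simp_all add: continuous_on_closest_point)
  show ?thesis
    unfolding douglas_rachford_def
    by (intro continuous_intros continuous_on_compose2[OF cB] cA) auto
qed

lemma douglas_rachford_fixed_points:
  fixes A B :: "'a::euclidean_space set"
  assumes "closed A" "convex A" "closed B" "convex B"
    and "\<And>a. a \<in> A \<Longrightarrow> a - c \<in> LA" "\<And>b. b \<in> B \<Longrightarrow> b - c \<in> LB"
  shows "(A \<inter> B) + (LA\<^sup>\<bottom> \<inter> LB\<^sup>\<bottom>) \<subseteq> {x. douglas_rachford A B x = x}"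
proof
  fix x assume "x \<in> (A \<inter> B) + (LA\<^sup>\<bottom> \<inter> LB\<^sup>\<bottom>)"
  then obtain p w where x: "x = p + w" and p: "p \<in> A" "p \<in> B" and w: "w \<in> LA\<^sup>\<bottom>" "w \<in> LB\<^sup>\<bottom>"
    by (auto elim: set_plus_elim)
  \<comment> \<open>\<open>w\<close> is normal to both sets at \<open>p\<close>, so \<open>p\<close> is the projection of \<open>p + w\<close> and of \<open>p - w\<close>\<close>
  have normal: "inner w (s - p) = 0" if "s - c \<in> L" "p - c \<in> L" "w \<in> L\<^sup>\<bottom>" for s L
  proof -
    have "inner w (s - c) = 0" "inner w (p - c) = 0"
      using that unfolding orthogonal_comp_def orthogonal_def by (auto simp: inner_commute)
    moreover have "inner w (s - p) = inner w (s - c) - inner w (p - c)"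
      by (simp add: inner_diff_right)
    ultimately show ?thesis
      by simp
  qed
  have "closest_point A (p + w) = p"
  proof (rule closest_point_eqI[OF assms(1,2) p(1)])
    fix s assume "s \<in> A"
    then show "inner (p + w - p) (s - p) \<le> 0"
      using normal[of s LA] assms(5) p(1) w(1) by simp
  qed
  moreover have "closest_point B (p - w) = p"
  proof (rule closest_point_eqI[OF assms(3,4) p(2)])
    fix s assume "s \<in> B"
    then show "inner (p - w - p) (s - p) \<le> 0"
      using normal[of s LB] assms(6) p(2) w(2) by simp
  qed
  ultimately show "x \<in> {x. douglas_rachford A B x = x}"
    unfolding douglas_rachford_def x by (simp add: algebra_simps scaleR_2)
qed

lemma relative_ball_core:
  fixes A B :: "'a::euclidean_space set"
  assumes "relative_ball A LA c r" "relative_ball B LB c r"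
  shows "relative_ball ((A \<inter> B) + (LA\<^sup>\<bottom> \<inter> LB\<^sup>\<bottom>)) ((LA \<inter> LB) + (LA\<^sup>\<bottom> \<inter> LB\<^sup>\<bottom>)) c r"
  unfolding relative_ball_def
proof (intro conjI ballI impI)
  fix x assume "x \<in> (A \<inter> B) + (LA\<^sup>\<bottom> \<inter> LB\<^sup>\<bottom>)"
  then obtain p w where x: "x = p + w" and p: "p \<in> A \<inter> B" and w: "w \<in> LA\<^sup>\<bottom> \<inter> LB\<^sup>\<bottom>"
    by (rule set_plus_elim)
  have "p - c \<in> LA \<inter> LB"
    using assms p unfolding relative_ball_def by blast
  then have "(p - c) + w \<in> (LA \<inter> LB) + (LA\<^sup>\<bottom> \<inter> LB\<^sup>\<bottom>)"
    using w by (rule set_plus_intro)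
  then show "x - c \<in> (LA \<inter> LB) + (LA\<^sup>\<bottom> \<inter> LB\<^sup>\<bottom>)"
    unfolding x by (simp add: algebra_simps)
next
  fix v assume "v \<in> (LA \<inter> LB) + (LA\<^sup>\<bottom> \<inter> LB\<^sup>\<bottom>)" and "norm v \<le> r"
  from this(1) obtain l w where v: "v = l + w" and l: "l \<in> LA \<inter> LB" and w: "w \<in> LA\<^sup>\<bottom> \<inter> LB\<^sup>\<bottom>"
    by (rule set_plus_elim)
  have "orthogonal l w"
    using l w unfolding orthogonal_comp_def by blast
  then have "(norm v)\<^sup>2 = (norm l)\<^sup>2 + (norm w)\<^sup>2"
    unfolding v by (rule norm_add_Pythagorean)
  then have "(norm l)\<^sup>2 \<le> (norm v)\<^sup>2"
    by simp
  then have "norm l \<le> r"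
    using power2_le_imp_le[of "norm l" "norm v"] \<open>norm v \<le> r\<close> by simp
  then have "c + l \<in> A \<inter> B"
    using assms l unfolding relative_ball_def by blast
  then show "c + v \<in> (A \<inter> B) + (LA\<^sup>\<bottom> \<inter> LB\<^sup>\<bottom>)"
    using w unfolding v by (metis add.assoc set_plus_intro)
qed

lemma douglas_rachford_step_bounds:
  fixes A B :: "'a::euclidean_space set"
  assumes "closed A" "convex A" "closed B" "convex B" "c \<in> A" "c \<in> B" "norm (x - c) \<le> R"
  defines "a \<equiv> closest_point A x" and "b \<equiv> closest_point B (2 *\<^sub>R closest_point A x - x)"
  shows "norm (a - c) \<le> R"
    and "inner (x - a) (a - b) \<le> norm (a - b) * R"
    and "inner (a - b) b - inner (a - b) c \<le> 2 * (norm (a - b) * R)"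
proof -
  have "norm (x - a) \<le> R"
    using closest_point_le[OF assms(1,5), of x] assms(7) unfolding a_def by (simp add: dist_norm)
  show "norm (a - c) \<le> R"
    using closest_point_dist_le[OF assms(1,2,5), of x] assms(7) unfolding a_def by (simp add: dist_norm)
  have "norm (b - c) \<le> norm ((a - c) - (x - a))"
    using closest_point_dist_le[OF assms(3,4,6), of "2 *\<^sub>R a - x"] unfolding b_def a_def
    by (simp add: dist_norm algebra_simps scaleR_2)
  also have "\<dots> \<le> norm (a - c) + norm (x - a)"
    by (rule norm_triangle_ineq4)
  finally have "norm (b - c) \<le> 2 * R"
    using \<open>norm (x - a) \<le> R\<close> \<open>norm (a - c) \<le> R\<close> by simp
  have "inner (x - a) (a - b) \<le> norm (x - a) * norm (a - b)"
    by (rule norm_cauchy_schwarz)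
  also have "\<dots> \<le> R * norm (a - b)"
    using \<open>norm (x - a) \<le> R\<close> by (rule mult_right_mono) simp
  finally show "inner (x - a) (a - b) \<le> norm (a - b) * R"
    by (simp add: mult.commute)
  have "inner (a - b) (b - c) \<le> norm (a - b) * norm (b - c)"
    by (rule norm_cauchy_schwarz)
  also have "\<dots> \<le> norm (a - b) * (2 * R)"
    using \<open>norm (b - c) \<le> 2 * R\<close> by (rule mult_left_mono) simp
  finally show "inner (a - b) b - inner (a - b) c \<le> 2 * (norm (a - b) * R)"
    by (simp add: inner_diff_right)
qed

text \<open>The residual \<open>x - a\<close> is normal to \<open>A\<close> at \<open>a\<close>, and \<open>(2a - x) - b\<close> is normal to \<open>B\<close> at
  \<open>b\<close>. Testing these normal cone inequalities against the relative balls about \<open>c\<close> shows that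
  \<open>x - a\<close> is orthogonal to both directions up to an error proportional to
  \<open>a - b = x - douglas_rachford A B x\<close>.\<close>
lemma douglas_rachford_normal_bound:
  fixes A B :: "'a::euclidean_space set"
  assumes "closed A" "convex A" "closed B" "convex B" "subspace LA" "subspace LB" "r \<ge> 0"
    and rbA: "relative_ball A LA c r" and rbB: "relative_ball B LB c r"
    and "norm (x - c) \<le> R"
  defines "a \<equiv> closest_point A x" and "b \<equiv> closest_point B (2 *\<^sub>R closest_point A x - x)"
  shows "\<And>s. s \<in> LA \<Longrightarrow> norm s \<le> r \<Longrightarrow> inner (x - a) s \<le> norm (a - b) * (3 * R + r)"
    and "\<And>s. s \<in> LB \<Longrightarrow> norm s \<le> r \<Longrightarrow> inner (x - a) s \<le> norm (a - b) * (3 * R + r)"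
proof -
  define u where "u = x - a"
  define e where "e = a - b"
  have "c \<in> A" "c \<in> B"
    using relative_ball_centre[OF rbA assms(5,7)] relative_ball_centre[OF rbB assms(6,7)] .
  have normal_A: "inner u (s - a) \<le> 0" if "s \<in> A" for s
    unfolding u_def a_def using closest_point_dot[OF assms(2,1) that] .
  have normal_B: "inner (e - u) (s - b) \<le> 0" if "s \<in> B" for s
  proof -
    have "e - u = (2 *\<^sub>R a - x) - b"
      unfolding e_def u_def by (simp add: algebra_simps scaleR_2)
    then show ?thesis
      unfolding b_def a_def using closest_point_dot[OF assms(4,3) that] by simp
  qed
  have split_a: "inner u a = inner u e + inner u b"
    unfolding e_def by (simp add: inner_diff_right)
  have normal_c_B: "inner e c - inner e b - inner u c + inner u b \<le> 0"
    using normal_B[OF \<open>c \<in> B\<close>] by (simp add: inner_diff_left inner_diff_right)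
  have normal_c_A: "inner u c - inner u a \<le> 0"
    using normal_A[OF \<open>c \<in> A\<close>] by (simp add: inner_diff_right)
  have arith: "norm e * (3 * R + r) = 3 * (norm e * R) + norm e * r" "norm e * r \<ge> 0"
    using assms(7) by (simp_all add: algebra_simps)
  note bounds = split_a normal_c_B normal_c_A arith
    douglas_rachford_step_bounds(2,3)[OF assms(1-4) \<open>c \<in> A\<close> \<open>c \<in> B\<close> assms(10),
      folded a_def b_def, folded u_def e_def]
  show "inner (x - a) s \<le> norm (a - b) * (3 * R + r)" if "s \<in> LA" "norm s \<le> r" for s
  proof -
    have "c + s \<in> A"
      using rbA that unfolding relative_ball_def by blast
    then have "inner u (c + s - a) \<le> 0"
      by (rule normal_A)
    then have "inner u c + inner u s - inner u a \<le> 0"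
      by (simp add: inner_diff_right inner_add_right)
    then show ?thesis
      using bounds unfolding u_def[symmetric] e_def[symmetric] by linarith
  qed
  show "inner (x - a) s \<le> norm (a - b) * (3 * R + r)" if "s \<in> LB" "norm s \<le> r" for s
  proof -
    have "- s \<in> LB" "norm (- s) \<le> r"
      using assms(6) that by (simp_all add: subspace_neg)
    then have "c + - s \<in> B"
      using rbB unfolding relative_ball_def by blast
    then have "inner (e - u) (c + - s - b) \<le> 0"
      by (rule normal_B)
    then have "inner e c - inner e s - inner e b - inner u c + inner u s + inner u b \<le> 0"
      by (simp add: inner_diff_left inner_diff_right)
    moreover have "inner e s \<le> norm e * norm s"
      by (rule norm_cauchy_schwarz)
    moreover have "norm e * norm s \<le> norm e * r"
      using that(2) by (rule mult_left_mono) simp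
    ultimately show ?thesis
      using bounds unfolding u_def[symmetric] e_def[symmetric] by linarith
  qed
qed

lemma douglas_rachford_orthogonal_approx:
  fixes A B :: "'a::euclidean_space set"
  assumes "closed A" "convex A" "closed B" "convex B" "subspace LA" "subspace LB" "r > 0"
    and "relative_ball A LA c r" "relative_ball B LB c r" "norm (x - c) \<le> R" "R \<ge> 0"
    and \<mu>: "linearly_regular_on {LA\<^sup>\<bottom>, LB\<^sup>\<bottom>} UNIV \<mu>"
  shows "\<exists>w\<in>LA\<^sup>\<bottom> \<inter> LB\<^sup>\<bottom>. norm ((x - closest_point A x) - w)
           \<le> \<mu> * (norm (x - douglas_rachford A B x) * ((3 * R + r) / r))"
proof -
  define \<epsilon> where "\<epsilon> = norm (x - douglas_rachford A B x)"
  note bound = douglas_rachford_normal_bound[OF assms(1-6) less_imp_le[OF assms(7)] assms(8-10)]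
  have "\<exists>w\<in>L\<^sup>\<bottom>. norm ((x - closest_point A x) - w) \<le> \<epsilon> * ((3 * R + r) / r)"
    if "L \<in> {LA, LB}" for L
  proof -
    have "\<epsilon> = norm (closest_point A x - closest_point B (2 *\<^sub>R closest_point A x - x))"
      unfolding \<epsilon>_def douglas_rachford_def by (simp add: algebra_simps)
    then have "subspace L" and
      "\<And>s. s \<in> L \<Longrightarrow> norm s \<le> r \<Longrightarrow> inner (x - closest_point A x) s \<le> \<epsilon> * (3 * R + r)"
      using that assms(5,6) bound by auto
    from orthogonal_comp_approx[OF this(1) \<open>r > 0\<close> this(2)] show ?thesis
      by simp
  qed
  then have "\<exists>w\<in>C. norm ((x - closest_point A x) - w) \<le> \<epsilon> * ((3 * R + r) / r)"
    if "C \<in> {LA\<^sup>\<bottom>, LB\<^sup>\<bottom>}" for C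
    using that by blast
  moreover have "\<epsilon> * ((3 * R + r) / r) \<ge> 0"
    unfolding \<epsilon>_def using \<open>r > 0\<close> \<open>R \<ge> 0\<close> by simp
  ultimately show ?thesis
    using linearly_regular_onD[OF \<mu> UNIV_I, of "\<epsilon> * ((3 * R + r) / r)" "x - closest_point A x"]
    unfolding \<epsilon>_def by auto
qed

lemma douglas_rachford_regular:
  fixes A B :: "'a::euclidean_space set"
  assumes "closed A" "convex A" "closed B" "convex B" "subspace LA" "subspace LB" "r > 0"
    and rbA: "relative_ball A LA c r" and rbB: "relative_ball B LB c r" and "R \<ge> 0"
  shows "\<exists>\<kappa>\<ge>0. \<forall>x\<in>cball c R. \<exists>p\<in>(A \<inter> B) + (LA\<^sup>\<bottom> \<inter> LB\<^sup>\<bottom>).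
           norm (x - p) \<le> \<kappa> * norm (x - douglas_rachford A B x)"
proof -
  obtain \<kappa>\<^sub>1 where "\<kappa>\<^sub>1 \<ge> 0" and \<kappa>\<^sub>1: "linearly_regular_on {A, B} (cball c R) \<kappa>\<^sub>1"
    using linearly_regular_on_convex[of "{A, B}" r c R] assms by blast
  have "\<exists>\<mu>\<ge>0. linearly_regular_on {LA\<^sup>\<bottom>, LB\<^sup>\<bottom>} UNIV \<mu>"
    by (rule linearly_regular_on_subspaces) (auto simp: subspace_orthogonal_comp)
  then obtain \<mu> where "\<mu> \<ge> 0" and \<mu>: "linearly_regular_on {LA\<^sup>\<bottom>, LB\<^sup>\<bottom>} UNIV \<mu>"
    by blast
  define K where "K = \<kappa>\<^sub>1 + \<mu> * ((3 * R + r) / r)"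
  have "\<exists>p\<in>(A \<inter> B) + (LA\<^sup>\<bottom> \<inter> LB\<^sup>\<bottom>). norm (x - p) \<le> K * norm (x - douglas_rachford A B x)"
    if x: "x \<in> cball c R" for x
  proof -
    define a where "a = closest_point A x"
    define b where "b = closest_point B (2 *\<^sub>R a - x)"
    have \<epsilon>: "norm (x - douglas_rachford A B x) = norm (a - b)"
      unfolding a_def b_def douglas_rachford_def by (simp add: algebra_simps)
    have "c \<in> A" "c \<in> B" "norm (x - c) \<le> R"
      using relative_ball_centre[OF rbA assms(5)] relative_ball_centre[OF rbB assms(6)] \<open>r > 0\<close> x
      by (auto simp: dist_norm norm_minus_commute)
    \<comment> \<open>\<open>a\<close> lies in \<open>A\<close> and within \<open>norm (a - b)\<close> of \<open>B\<close>, so it is close to \<open>A \<inter> B\<close>\<close>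
    have "a \<in> A" "b \<in> B"
      unfolding a_def b_def using closest_point_in_set assms(1,3) \<open>c \<in> A\<close> \<open>c \<in> B\<close> by blast+
    then have "\<exists>a'\<in>C. norm (a - a') \<le> norm (a - b)" if "C \<in> {A, B}" for C
      using that by (auto intro: bexI[of _ a] bexI[of _ b])
    moreover have "a \<in> cball c R"
      using douglas_rachford_step_bounds(1)[OF assms(1-4) \<open>c \<in> A\<close> \<open>c \<in> B\<close> \<open>norm (x - c) \<le> R\<close>]
      unfolding a_def by (simp add: dist_norm norm_minus_commute)
    ultimately obtain p where p: "p \<in> A \<inter> B" "norm (a - p) \<le> \<kappa>\<^sub>1 * norm (a - b)"
      using linearly_regular_onD[OF \<kappa>\<^sub>1, of a "norm (a - b)"] by auto
    obtain w where w: "w \<in> LA\<^sup>\<bottom> \<inter> LB\<^sup>\<bottom>" "norm ((x - a) - w) \<le> \<mu> * (norm (a - b) * ((3 * R + r) / r))"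
      using douglas_rachford_orthogonal_approx[OF assms(1-9) \<open>norm (x - c) \<le> R\<close> \<open>R \<ge> 0\<close> \<mu>]
      unfolding \<epsilon> a_def[symmetric] by blast
    have "norm (x - (p + w)) \<le> norm (a - p) + norm ((x - a) - w)"
      using norm_triangle_ineq[of "a - p" "(x - a) - w"] by (simp add: algebra_simps)
    also have "\<dots> \<le> K * norm (a - b)"
      using p(2) w(2) unfolding K_def by (simp add: algebra_simps)
    finally show ?thesis
      using p(1) w(1) \<epsilon> by (intro bexI[of _ "p + w"] set_plus_intro) auto
  qed
  moreover have "K \<ge> 0"
    unfolding K_def using \<open>\<kappa>\<^sub>1 \<ge> 0\<close> \<open>\<mu> \<ge> 0\<close> \<open>r > 0\<close> \<open>R \<ge> 0\<close> by simp
  ultimately show ?thesis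
    by blast
qed

section \<open>Fejer monotone iterations\<close>

lemma lin_conv_of_geometric_anchors:
  fixes y p :: "nat \<Rightarrow> 'a::banach"
  assumes "closed F" "\<And>n. p n \<in> F" "0 \<le> q" "q < 1"
    and anchor: "\<And>n k. n \<le> k \<Longrightarrow> norm (y k - p n) \<le> C * q ^ n"
  shows "\<exists>z\<in>F. lin_conv y z"
proof -
  have "C \<ge> 0"
    using order_trans[OF norm_ge_zero anchor[of 0 0]] by simp
  have q0: "(\<lambda>n. C * q ^ n) \<longlonglongrightarrow> 0"
    using assms(3,4) by (intro tendsto_mult_right_zero LIMSEQ_power_zero) simp
  have y_close: "norm (y k - y l) \<le> 2 * (C * q ^ n)" if "n \<le> k" "n \<le> l" for n k l
    using norm_triangle_ineq4[of "y k - p n" "y l - p n"] anchor[OF that(1)] anchor[OF that(2)]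
    by simp
  have "Cauchy y"
  proof (rule metric_CauchyI)
    fix e :: real assume "e > 0"
    then obtain N where "\<forall>n\<ge>N. norm (C * q ^ n - 0) < e / 2"
      using LIMSEQ_D[OF q0, of "e / 2"] by auto
    then have "C * q ^ N < e / 2"
      by (metis abs_ge_self diff_zero le_less_trans order_refl real_norm_def)
    then have "dist (y m) (y n) < e" if "N \<le> m" "N \<le> n" for m n
      using y_close[OF that] by (simp add: dist_norm)
    then show "\<exists>M. \<forall>m\<ge>M. \<forall>n\<ge>M. dist (y m) (y n) < e"
      by blast
  qed
  then obtain z where z: "y \<longlonglongrightarrow> z"
    using Cauchy_convergent_iff convergent_def by blast
  have z_anchor: "norm (z - p n) \<le> C * q ^ n" for n
  proof (rule LIMSEQ_le_const2)
    show "(\<lambda>k. norm (y k - p n)) \<longlonglongrightarrow> norm (z - p n)"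
      by (intro tendsto_intros z)
  qed (use anchor in auto)
  have "(\<lambda>n. p n - z) \<longlonglongrightarrow> 0"
    by (rule Lim_null_comparison[OF _ q0])
      (intro always_eventually allI, simp add: norm_minus_commute z_anchor)
  then have "p \<longlonglongrightarrow> z"
    by (rule LIM_zero_cancel)
  then have "z \<in> F"
    using closed_sequentially[OF assms(1)] assms(2) by blast
  moreover have "norm (y n - z) \<le> (2 * C) * q ^ n" for n
    using norm_triangle_ineq4[of "y n - p n" "z - p n"] anchor[of n n] z_anchor[of n] by simp
  ultimately show ?thesis
    unfolding lin_conv_def using \<open>C \<ge> 0\<close> assms(3,4) by (intro bexI[of _ z] exI[of _ "2 * C"] exI[of _ q]) auto
qed

lemma fejer_regular_step:
  fixes T :: "'a::euclidean_space \<Rightarrow> 'a"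
  assumes F: "closed F" "convex F" "F \<noteq> {}" and "\<kappa> > 0"
    and fejer: "\<And>z. z \<in> F \<Longrightarrow> (norm (T x - z))\<^sup>2 + s \<le> (norm (x - z))\<^sup>2"
    and "p \<in> F" "(norm (x - p))\<^sup>2 \<le> \<kappa> * s"
  shows "\<And>z. z \<in> F \<Longrightarrow> norm (T x - z) \<le> norm (x - z)"
    and "norm (T x - closest_point F (T x)) \<le> sqrt (max 0 (1 - 1 / \<kappa>)) * norm (x - closest_point F x)"
proof -
  define d where "d = norm (x - closest_point F x)"
  have "d \<le> norm (x - p)"
    using closest_point_le[OF F(1) \<open>p \<in> F\<close>] unfolding d_def by (simp add: dist_norm)
  then have "d\<^sup>2 \<le> (norm (x - p))\<^sup>2"
    by (rule power_mono) (simp add: d_def)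
  then have s: "d\<^sup>2 \<le> \<kappa> * s"
    using assms(7) by linarith
  then have "s \<ge> 0"
    using \<open>\<kappa> > 0\<close> order_trans[OF zero_le_power2 s] by (simp add: zero_le_mult_iff)
  show "norm (T x - z) \<le> norm (x - z)" if "z \<in> F" for z
  proof -
    have "(norm (T x - z))\<^sup>2 \<le> (norm (x - z))\<^sup>2"
      using fejer[OF that] \<open>s \<ge> 0\<close> by linarith
    then show ?thesis
      by (simp add: power2_le_iff_abs_le)
  qed
  have "closest_point F x \<in> F"
    using F by (simp add: closest_point_in_set)
  then have "(norm (T x - closest_point F (T x)))\<^sup>2 \<le> (norm (T x - closest_point F x))\<^sup>2"
    using closest_point_le[OF F(1)] by (simp add: dist_norm power_mono)
  also have "\<dots> \<le> d\<^sup>2 - s"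
    using fejer[OF \<open>closest_point F x \<in> F\<close>] unfolding d_def by simp
  also have "\<dots> \<le> (1 - 1 / \<kappa>) * d\<^sup>2"
    using s \<open>\<kappa> > 0\<close> by (simp add: algebra_simps divide_le_eq mult.commute)
  also have "\<dots> \<le> max 0 (1 - 1 / \<kappa>) * d\<^sup>2"
    by (intro mult_right_mono) auto
  also have "\<dots> = (sqrt (max 0 (1 - 1 / \<kappa>)) * d)\<^sup>2"
    by (simp add: power_mult_distrib)
  finally show "norm (T x - closest_point F (T x)) \<le> sqrt (max 0 (1 - 1 / \<kappa>)) * d"
    by (rule power2_le_imp_le) (simp add: d_def)
qed

lemma lin_conv_of_fejer_regular:
  fixes T :: "'a::euclidean_space \<Rightarrow> 'a" and S :: "'a \<Rightarrow> real"
  assumes F: "closed F" "convex F" "F \<noteq> {}" and "\<kappa> > 0"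
    and fejer: "\<And>x z. z \<in> F \<Longrightarrow> (norm (T x - z))\<^sup>2 + S x \<le> (norm (x - z))\<^sup>2"
    and regular: "\<And>n. \<exists>p\<in>F. (norm ((T ^^ n) x0 - p))\<^sup>2 \<le> \<kappa> * S ((T ^^ n) x0)"
  shows "\<exists>z\<in>F. lin_conv (\<lambda>n. (T ^^ n) x0) z"
proof -
  define y where "y n = (T ^^ n) x0" for n
  define d where "d n = norm (y n - closest_point F (y n))" for n
  define q where "q = sqrt (max 0 (1 - 1 / \<kappa>))"
  have q: "0 \<le> q" "q < 1"
    unfolding q_def using \<open>\<kappa> > 0\<close> by (auto simp: real_sqrt_lt_1_iff)
  have y_Suc: "y (Suc n) = T (y n)" for n
    unfolding y_def by simp
  have contraction: "(\<forall>z\<in>F. norm (y (Suc n) - z) \<le> norm (y n - z)) \<and> d (Suc n) \<le> q * d n" for n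
  proof -
    obtain p where "p \<in> F" "(norm (y n - p))\<^sup>2 \<le> \<kappa> * S (y n)"
      using regular unfolding y_def by blast
    from fejer_regular_step[where T = T and x = "y n", OF F \<open>\<kappa> > 0\<close> fejer this] show ?thesis
      unfolding y_Suc d_def q_def by blast
  qed
  have d_geometric: "d n \<le> d 0 * q ^ n" for n
  proof (induction n)
    case (Suc n)
    have "d (Suc n) \<le> q * d n"
      using contraction by blast
    also have "\<dots> \<le> q * (d 0 * q ^ n)"
      using Suc q(1) by (rule mult_left_mono)
    finally show ?case
      by (simp add: mult_ac)
  qed simp
  have closest: "closest_point F (y n) \<in> F" for n
    using F by (simp add: closest_point_in_set)
  have anchor: "norm (y k - closest_point F (y n)) \<le> d 0 * q ^ n" if "n \<le> k" for n k
    using that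
  proof (induction k rule: dec_induct)
    case base
    then show ?case
      using d_geometric unfolding d_def by simp
  next
    case (step k)
    then show ?case
      using contraction[of k] closest[of n] by fastforce
  qed
  have "y = (\<lambda>n. (T ^^ n) x0)"
    by (simp add: fun_eq_iff y_def)
  then show ?thesis
    using lin_conv_of_geometric_anchors[OF F(1) closest q anchor] by simp
qed

section \<open>The cyclic Douglas--Rachford algorithm\<close>

locale cyclic_douglas_rachford =
  fixes m :: nat and U :: "nat \<Rightarrow> 'a::euclidean_space set" and c :: 'a
  assumes m_pos: "m \<ge> 1"
    and closed_U: "\<And>i. i \<in> {1..m} \<Longrightarrow> closed (U i)"
    and convex_U: "\<And>i. i \<in> {1..m} \<Longrightarrow> convex (U i)"
    and rel_interior_U: "\<And>i. i \<in> {1..m} \<Longrightarrow> c \<in> rel_interior (U i)"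
begin

definition succ :: "nat \<Rightarrow> nat" where
  "succ i = (if i = m then 1 else Suc i)"

definition L :: "nat \<Rightarrow> 'a set" where
  "L i = span ((\<lambda>x. x - c) ` U i)"

text \<open>\<open>L i\<close> is the direction of \<open>affine hull (U i)\<close>. The core \<open>fix_core i\<close> lies in the fixed point set
  of \<open>T_op m U i\<close> and, unlike that set, visibly has \<open>c\<close> in its relative interior.\<close>
definition fix_core :: "nat \<Rightarrow> 'a set" where
  "fix_core i = (U i \<inter> U (succ i)) + ((L i)\<^sup>\<bottom> \<inter> (L (succ i))\<^sup>\<bottom>)"

lemma succ_mem: "i \<in> {1..m} \<Longrightarrow> succ i \<in> {1..m}"
  using m_pos by (auto simp: succ_def)

lemma T_op_eq_douglas_rachford:
  assumes "i \<in> {1..m}"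
  shows "T_op m U i = douglas_rachford (U i) (U (succ i))"
proof
  fix x
  have "Ucyc m U i = U i" "Ucyc m U (i + 1) = U (succ i)"
    using assms by (auto simp: Ucyc_def succ_def)
  then show "T_op m U i x = douglas_rachford (U i) (U (succ i)) x"
    unfolding T_op_def douglas_rachford_def refl_op_def proj_def by (simp add: algebra_simps)
qed

lemma c_mem_U: "i \<in> {1..m} \<Longrightarrow> c \<in> U i"
  using rel_interior_U rel_interior_subset by blast

lemma U_nonempty: "i \<in> {1..m} \<Longrightarrow> U i \<noteq> {}"
  using c_mem_U by blast

lemma common_relative_ball: "\<exists>r>0. \<forall>i\<in>{1..m}. relative_ball (U i) (L i) c r"
proof -
  have "\<forall>i\<in>{1..m}. \<exists>r>0. relative_ball (U i) (L i) c r"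
    unfolding L_def using rel_interior_relative_ball rel_interior_U by metis
  then obtain r where r: "\<And>i. i \<in> {1..m} \<Longrightarrow> r i > 0 \<and> relative_ball (U i) (L i) c (r i)"
    by metis
  have "Min (r ` {1..m}) > 0"
    using r m_pos by simp
  moreover have "relative_ball (U i) (L i) c (Min (r ` {1..m}))" if "i \<in> {1..m}" for i
    using r[OF that] that by (auto intro: relative_ball_mono)
  ultimately show ?thesis
    by blast
qed

lemma T_op_firmly_nonexpansive:
  assumes "i \<in> {1..m}"
  shows "(norm (T_op m U i x - T_op m U i y))\<^sup>2
           + (norm ((x - T_op m U i x) - (y - T_op m U i y)))\<^sup>2 \<le> (norm (x - y))\<^sup>2"
  unfolding T_op_eq_douglas_rachford[OF assms]
  using assms succ_mem closed_U convex_U U_nonempty by (intro douglas_rachford_firmly_nonexpansive) auto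

lemma fix_core_subset: "i \<in> {1..m} \<Longrightarrow> fix_core i \<subseteq> Fix (T_op m U i)"
  unfolding fix_core_def Fix_def T_op_eq_douglas_rachford
  using succ_mem closed_U convex_U
  by (intro douglas_rachford_fixed_points[of _ _ c]) (auto simp: L_def span_base)

lemma closed_Fix_T_op: "i \<in> {1..m} \<Longrightarrow> closed (Fix (T_op m U i))"
  unfolding Fix_def T_op_eq_douglas_rachford
  using succ_mem closed_U convex_U U_nonempty
  by (intro closed_Collect_eq continuous_on_douglas_rachford continuous_on_id) auto

lemma c_mem_fix_core: "i \<in> {1..m} \<Longrightarrow> c \<in> fix_core i"
  unfolding fix_core_def using c_mem_U succ_mem subspace_orthogonal_comp
  by (metis IntI add.right_neutral set_plus_intro subspace_0)

lemma convex_fix_core: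
  assumes "i \<in> {1..m}"
  shows "convex (fix_core i)"
proof -
  have "convex (U i \<inter> U (succ i))"
    using assms convex_U succ_mem by (intro convex_Int) auto
  moreover have "convex ((L i)\<^sup>\<bottom> \<inter> (L (succ i))\<^sup>\<bottom>)"
    by (intro convex_Int subspace_imp_convex subspace_orthogonal_comp)
  ultimately show ?thesis
    unfolding fix_core_def by (rule convex_set_plus)
qed

abbreviation fixed_points :: "'a set" where
  "fixed_points \<equiv> \<Inter>i\<in>{1..m}. Fix (T_op m U i)"

definition residual :: "'a \<Rightarrow> real" where
  "residual x = (\<Sum>i<m. (norm (T_comp m U i x - T_comp m U (Suc i) x))\<^sup>2)"

lemma residual_nonneg: "residual x \<ge> 0"
  unfolding residual_def by (simp add: sum_nonneg)

lemma c_mem_fixed_points: "c \<in> fixed_points"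
  using c_mem_fix_core fix_core_subset by blast

lemma T_comp_fejer:
  assumes "z \<in> fixed_points" "k \<le> m"
  shows "(norm (T_comp m U k x - z))\<^sup>2 + (\<Sum>i<k. (norm (T_comp m U i x - T_comp m U (Suc i) x))\<^sup>2)
           \<le> (norm (x - z))\<^sup>2"
  using assms(2)
proof (induction k)
  case (Suc k)
  then have "Suc k \<in> {1..m}"
    by simp
  then have "T_op m U (Suc k) z = z"
    using assms(1) unfolding Fix_def by blast
  then have "(norm (T_comp m U (Suc k) x - z))\<^sup>2 + (norm (T_comp m U k x - T_comp m U (Suc k) x))\<^sup>2
             \<le> (norm (T_comp m U k x - z))\<^sup>2"
    using T_op_firmly_nonexpansive[OF \<open>Suc k \<in> {1..m}\<close>, of "T_comp m U k x" z] by simp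
  then show ?case
    using Suc by simp
qed simp

lemma T_comp_cball:
  assumes "x \<in> cball c R" "k \<le> m"
  shows "T_comp m U k x \<in> cball c R"
proof -
  have "0 \<le> (\<Sum>i<k. (norm (T_comp m U i x - T_comp m U (Suc i) x))\<^sup>2)"
    by (simp add: sum_nonneg)
  then have "(norm (T_comp m U k x - c))\<^sup>2 \<le> (norm (x - c))\<^sup>2"
    using T_comp_fejer[OF c_mem_fixed_points assms(2), of x] by linarith
  then show ?thesis
    using assms(1) by (simp add: dist_norm norm_minus_commute power2_le_iff_abs_le)
qed

lemma T_comp_step_le:
  assumes "i < m"
  shows "norm (T_comp m U i x - T_comp m U (Suc i) x) \<le> sqrt (residual x)"
proof -
  have "(norm (T_comp m U i x - T_comp m U (Suc i) x))\<^sup>2 \<le> residual x"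
    unfolding residual_def using assms by (intro member_le_sum) auto
  then show ?thesis
    by (rule real_le_rsqrt)
qed

lemma T_comp_dist_le:
  assumes "k \<le> m"
  shows "norm (x - T_comp m U k x) \<le> k * sqrt (residual x)"
  using assms
proof (induction k)
  case (Suc k)
  have "norm (x - T_comp m U (Suc k) x)
        \<le> norm (x - T_comp m U k x) + norm (T_comp m U k x - T_comp m U (Suc k) x)"
    using norm_triangle_ineq[of "x - T_comp m U k x" "T_comp m U k x - T_comp m U (Suc k) x"] by simp
  also have "\<dots> \<le> k * sqrt (residual x) + sqrt (residual x)"
    using Suc T_comp_step_le[of k x] by simp
  finally show ?case
    by (simp add: algebra_simps)
qed simp

lemma T_op_regular:
  assumes "R \<ge> 0"
  obtains K where "K \<ge> 0"
    and "\<And>i x. i \<in> {1..m} \<Longrightarrow> x \<in> cball c R \<Longrightarrow>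
           \<exists>p\<in>fix_core i. norm (x - p) \<le> K * norm (x - T_op m U i x)"
proof -
  obtain r where "r > 0" and rb: "\<And>i. i \<in> {1..m} \<Longrightarrow> relative_ball (U i) (L i) c r"
    using common_relative_ball by blast
  have "\<exists>\<kappa>\<ge>0. \<forall>x\<in>cball c R. \<exists>p\<in>fix_core i. norm (x - p) \<le> \<kappa> * norm (x - T_op m U i x)"
    if i: "i \<in> {1..m}" for i
    unfolding fix_core_def T_op_eq_douglas_rachford[OF i]
    using i succ_mem closed_U convex_U rb \<open>r > 0\<close> assms
    by (intro douglas_rachford_regular) (auto simp: L_def)
  then obtain \<kappa> where \<kappa>: "\<And>i. i \<in> {1..m} \<Longrightarrow> \<kappa> i \<ge> 0 \<and>
      (\<forall>x\<in>cball c R. \<exists>p\<in>fix_core i. norm (x - p) \<le> \<kappa> i * norm (x - T_op m U i x))"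
    by metis
  show thesis
  proof (rule that[of "\<Sum>i\<in>{1..m}. \<kappa> i"])
    show "(\<Sum>i\<in>{1..m}. \<kappa> i) \<ge> 0"
      using \<kappa> by (intro sum_nonneg) blast
    fix i x assume i: "i \<in> {1..m}" and x: "x \<in> cball c R"
    then obtain p where "p \<in> fix_core i" "norm (x - p) \<le> \<kappa> i * norm (x - T_op m U i x)"
      using \<kappa> by blast
    moreover have "\<kappa> i \<le> (\<Sum>i\<in>{1..m}. \<kappa> i)"
      using \<kappa> i by (intro member_le_sum) auto
    ultimately show "\<exists>p\<in>fix_core i. norm (x - p) \<le> (\<Sum>i\<in>{1..m}. \<kappa> i) * norm (x - T_op m U i x)"
      by (meson mult_right_mono norm_ge_zero order_trans)
  qed
qed

lemma fix_cores_regular: "\<exists>\<kappa>\<ge>0. linearly_regular_on (fix_core ` {1..m}) (cball c R) \<kappa>"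
proof -
  obtain r where "r > 0" and rb: "\<And>i. i \<in> {1..m} \<Longrightarrow> relative_ball (U i) (L i) c r"
    using common_relative_ball by blast
  show ?thesis
  proof (rule linearly_regular_on_convex)
    fix C assume "C \<in> fix_core ` {1..m}"
    then obtain i where i: "i \<in> {1..m}" and C: "C = fix_core i"
      by blast
    have "subspace ((L i \<inter> L (succ i)) + ((L i)\<^sup>\<bottom> \<inter> (L (succ i))\<^sup>\<bottom>))"
      unfolding L_def by (intro subspace_set_plus subspace_inter subspace_span subspace_orthogonal_comp)
    moreover have "relative_ball C ((L i \<inter> L (succ i)) + ((L i)\<^sup>\<bottom> \<inter> (L (succ i))\<^sup>\<bottom>)) c r"
      unfolding C fix_core_def using i succ_mem by (intro relative_ball_core rb)
    ultimately show "convex C \<and> (\<exists>M. subspace M \<and> relative_ball C M c r)"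
      using convex_fix_core[OF i] C by blast
  qed (use \<open>r > 0\<close> in simp_all)
qed

text \<open>The partial iterates move by at most \<open>sqrt (residual x)\<close> per step, and the \<open>k\<close>-th of them
  is close to \<open>fix_core (Suc k)\<close> by the regularity of \<open>T_op m U (Suc k)\<close>.\<close>
lemma fix_core_near:
  fixes K :: real
  assumes "K \<ge> 0"
    and K: "\<And>i x. i \<in> {1..m} \<Longrightarrow> x \<in> cball c R \<Longrightarrow>
              \<exists>p\<in>fix_core i. norm (x - p) \<le> K * norm (x - T_op m U i x)"
    and x: "x \<in> cball c R" and "i \<in> {1..m}"
  shows "\<exists>p\<in>fix_core i. norm (x - p) \<le> (real m + K) * sqrt (residual x)"
proof -
  obtain k where k: "k < m" and i: "i = Suc k"
    using \<open>i \<in> {1..m}\<close> by (auto simp: Suc_le_eq gr0_conv_Suc)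
  let ?y = "T_comp m U k x"
  obtain p where "p \<in> fix_core i" and p: "norm (?y - p) \<le> K * norm (?y - T_comp m U (Suc k) x)"
    using K[of i ?y] T_comp_cball[OF x, of k] k i \<open>i \<in> {1..m}\<close> by auto
  have "K * norm (?y - T_comp m U (Suc k) x) \<le> K * sqrt (residual x)"
    using T_comp_step_le[OF k] \<open>K \<ge> 0\<close> by (rule mult_left_mono)
  then have "norm (?y - p) \<le> K * sqrt (residual x)"
    using p by linarith
  then have "norm (x - p) \<le> k * sqrt (residual x) + K * sqrt (residual x)"
    using norm_triangle_ineq[of "x - ?y" "?y - p"] T_comp_dist_le[of k x] k by simp
  also have "\<dots> \<le> (real m + K) * sqrt (residual x)"
    using k residual_nonneg[of x] by (simp add: distrib_right mult_right_mono)
  finally show ?thesis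
    using \<open>p \<in> fix_core i\<close> by blast
qed

lemma residual_regular:
  assumes "R \<ge> 0"
  obtains \<kappa> where "\<kappa> > 0"
    and "\<And>x. x \<in> cball c R \<Longrightarrow> \<exists>p\<in>\<Inter>(fix_core ` {1..m}). (norm (x - p))\<^sup>2 \<le> \<kappa> * residual x"
proof -
  obtain K where "K \<ge> 0" and K: "\<And>i x. i \<in> {1..m} \<Longrightarrow> x \<in> cball c R \<Longrightarrow>
      \<exists>p\<in>fix_core i. norm (x - p) \<le> K * norm (x - T_op m U i x)"
    using T_op_regular[OF assms] by blast
  obtain \<kappa> where "\<kappa> \<ge> 0" and \<kappa>: "linearly_regular_on (fix_core ` {1..m}) (cball c R) \<kappa>"
    using fix_cores_regular by blast
  have "\<exists>p\<in>\<Inter>(fix_core ` {1..m}). (norm (x - p))\<^sup>2 \<le> ((\<kappa> * (real m + K))\<^sup>2 + 1) * residual x"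
    if x: "x \<in> cball c R" for x
  proof -
    have "(real m + K) * sqrt (residual x) \<ge> 0"
      using \<open>K \<ge> 0\<close> residual_nonneg[of x] by simp
    then obtain p where "p \<in> \<Inter>(fix_core ` {1..m})"
      and p: "norm (x - p) \<le> \<kappa> * ((real m + K) * sqrt (residual x))"
      using linearly_regular_onD[OF \<kappa> x] fix_core_near[OF \<open>K \<ge> 0\<close> K x] by blast
    have "(norm (x - p))\<^sup>2 \<le> (\<kappa> * ((real m + K) * sqrt (residual x)))\<^sup>2"
      using p by (simp add: power_mono)
    also have "\<dots> = (\<kappa> * (real m + K))\<^sup>2 * residual x"
      using residual_nonneg[of x] by (simp add: power_mult_distrib)
    also have "\<dots> \<le> ((\<kappa> * (real m + K))\<^sup>2 + 1) * residual x"
      using residual_nonneg[of x] by (simp add: distrib_right)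
    finally show ?thesis
      using \<open>p \<in> \<Inter>(fix_core ` {1..m})\<close> by blast
  qed
  moreover have "(\<kappa> * (real m + K))\<^sup>2 + 1 > 0"
    by (simp add: add_nonneg_pos)
  ultimately show thesis
    using that by blast
qed

theorem lin_conv_orbit: "\<exists>z\<in>fixed_points. lin_conv (\<lambda>n. (T_comp m U m ^^ n) x0) z"
proof -
  define F where "F = closure (\<Inter>(fix_core ` {1..m}))"
  have c: "c \<in> \<Inter>(fix_core ` {1..m})"
    using c_mem_fix_core by blast
  have "closed F" "convex F" "F \<noteq> {}"
    unfolding F_def using convex_fix_core c closure_subset by (auto intro!: convex_closure convex_INT)
  have "\<Inter>(fix_core ` {1..m}) \<subseteq> fixed_points"
    using fix_core_subset by blast
  then have "F \<subseteq> fixed_points"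
    unfolding F_def using closed_Fix_T_op by (intro closure_minimal closed_INT) auto
  define R where "R = norm (x0 - c)"
  obtain \<kappa> where "\<kappa> > 0" and \<kappa>:
      "\<And>x. x \<in> cball c R \<Longrightarrow> \<exists>p\<in>\<Inter>(fix_core ` {1..m}). (norm (x - p))\<^sup>2 \<le> \<kappa> * residual x"
    using residual_regular[of R] unfolding R_def by auto
  have orbit: "(T_comp m U m ^^ n) x0 \<in> cball c R" for n
  proof (induction n)
    case (Suc n)
    then show ?case
      using T_comp_cball[of "(T_comp m U m ^^ n) x0" R m] by simp
  qed (simp add: R_def dist_norm norm_minus_commute)
  have "\<exists>z\<in>F. lin_conv (\<lambda>n. (T_comp m U m ^^ n) x0) z"
  proof (rule lin_conv_of_fejer_regular[OF \<open>closed F\<close> \<open>convex F\<close> \<open>F \<noteq> {}\<close> \<open>\<kappa> > 0\<close>])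
    show "(norm (T_comp m U m x - z))\<^sup>2 + residual x \<le> (norm (x - z))\<^sup>2" if "z \<in> F" for x z
      using T_comp_fejer[of z m x] \<open>F \<subseteq> fixed_points\<close> that unfolding residual_def by blast
    show "\<exists>p\<in>F. (norm ((T_comp m U m ^^ n) x0 - p))\<^sup>2 \<le> \<kappa> * residual ((T_comp m U m ^^ n) x0)" for n
      using \<kappa>[OF orbit[of n]] closure_subset unfolding F_def by blast
  qed
  then show ?thesis
    using \<open>F \<subseteq> fixed_points\<close> by blast
qed

end

theorem corollary8p2:
  fixes U :: "nat \<Rightarrow> 'a::euclidean_space set" and m :: nat and x0 :: 'a
  assumes "m \<ge> 1"
    and "\<And>i. i \<in> {1..m} \<Longrightarrow> closed (U i)"
    and "\<And>i. i \<in> {1..m} \<Longrightarrow> convex (U i)"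
    and "(\<Inter>i\<in>{1..m}. rel_interior (U i)) \<noteq> {}"
  shows "\<exists>z \<in> (\<Inter>i\<in>{1..m}. Fix (T_op m U i)).
           lin_conv (\<lambda>n. (T_comp m U m ^^ n) x0) z"
proof -
  obtain c where "\<And>i. i \<in> {1..m} \<Longrightarrow> c \<in> rel_interior (U i)"
    using assms(4) by blast
  then interpret cyclic_douglas_rachford m U c
    using assms(1-3) by unfold_locales
  show ?thesis
    by (rule lin_conv_orbit)
qed

end
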